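(* Let $\mathbf{e}\in\mathbb{P}\mathrm{iez}$, let $\mathbf{h}$ be its leading harmonic part, $\mathbf{g}=\mathbf{e}-\mathbf{h}$, and $\mathbf{d}_2'=\mathbf{d}_2-\frac13\operatorname{tr}(\mathbf{d}_2)\mathbf{q}$ where $(\mathbf{d}_2)_{ij}=h_{ikl}h_{klj}$. Then $\mathbf{e}\in\overline{\Sigma}_{[\mathbb{O}^-]}$ (i.e. $\mathbf{e}$ has at least cubic symmetry) if and only if $\mathbf{g}=0$ and $\mathbf{d}_2'=0$. Moreover, $\mathbf{e}\in\Sigma_{[\mathbb{O}^-]}$ (i.e. the symmetry group of $\mathbf{e}$ is conjugate in $\mathrm{O}(3)$ to $\mathbb{O}^-$) if and only if $\mathbf{g}=0$, $\mathbf{d}_2'=0$ and $\mathbf{h}\neq 0$.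
   Context: $\mathbb{P}\mathrm{iez}=\{\mathbf{e}\in\otimes^3\mathbb{R}^3: \mathrm{e}_{ijk}=\mathrm{e}_{ikj}\}$ (components in an orthonormal basis), with $\mathrm{O}(3)$-action $(g\cdot\mathbf{e})_{ijk}=g_{ia}g_{jb}g_{kc}\mathrm{e}_{abc}$ and norm $\|\mathbf{e}\|^2=\mathrm{e}_{ijk}\mathrm{e}_{ijk}$. $\mathbf{q}=(\delta_{ij})$. Totally symmetric part: $(\mathbf{e}^s)_{ijk}=\frac13(\mathrm{e}_{ijk}+\mathrm{e}_{jik}+\mathrm{e}_{kji})$; its trace is the vector $u_i=(\mathbf{e}^s)_{ikk}$; $(\mathbf{q}\odot\mathbf{u})_{ijk}=\frac13(\delta_{ij}u_k+\delta_{ik}u_j+\delta_{jk}u_i)$. The leading harmonic part of $\mathbf{e}$ is $\mathbf{h}=\mathbf{e}^s-\frac35\,\mathbf{q}\odot\mathbf{u}$, a totally symmetric traceless third-order tensor. $\mathbb{O}^-\subset\mathrm{O}(3)$ is the group of all orthogonal transformations preserving the regular tetrahedron with vertices $(1,1,1),(1,-1,-1),(-1,1,-1),(-1,-1,1)$ (order 24; notation of Golubitsky–Stewart–Schaeffer). Symmetry group: $G_{\mathbf{e}}=\{g\in\mathrm{O}(3): g\cdot\mathbf{e}=\mathbf{e}\}$. $\overline{\Sigma}_{[\mathbb{O}^-]}=\{\mathbf{e}:\exists g\in\mathrm{O}(3),\ g\mathbb{O}^-g^{-1}\subset G_{\mathbf{e}}\}$ and $\Sigma_{[\mathbb{O}^-]}=\{\mathbf{e}: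 G_{\mathbf{e}}=g\mathbb{O}^-g^{-1}\text{ for some }g\in\mathrm{O}(3)\}$. *)

theory Defs
  imports "HOL-Analysis.Analysis"
begin

text \<open>Third-order tensors on R^3, components in an orthonormal basis:
  e $ i $ j $ k = e_ijk, indices in the 3-element type 3.\<close>

type_synonym tensor3 = "real^3^3^3"
type_synonym tensor2 = "real^3^3"

definition Piez :: "tensor3 set" where
  "Piez = {e. \<forall>i j k. e $ i $ j $ k = e $ i $ k $ j}"

definition kdelta :: "3 \<Rightarrow> 3 \<Rightarrow> real" where
  "kdelta i j = (if i = j then 1 else 0)"

definition O3 :: "tensor2 set" where
  "O3 = {g. orthogonal_matrix g}"

definition act :: "tensor2 \<Rightarrow> tensor3 \<Rightarrow> tensor3" where
  "act g e = (\<chi> i j k. \<Sum>a\<in>UNIV. \<Sum>b\<in>UNIV. \<Sum>c\<in>UNIV.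
                 g $ i $ a * g $ j $ b * g $ k $ c * e $ a $ b $ c)"

definition sym_part :: "tensor3 \<Rightarrow> tensor3" where
  "sym_part e = (\<chi> i j k. (e $ i $ j $ k + e $ j $ i $ k + e $ k $ j $ i) / 3)"

definition trace_vec :: "tensor3 \<Rightarrow> real^3" where
  "trace_vec e = (\<chi> i. \<Sum>k\<in>UNIV. sym_part e $ i $ k $ k)"

definition q_odot :: "real^3 \<Rightarrow> tensor3" where
  "q_odot u = (\<chi> i j k. (kdelta i j * u $ k + kdelta i k * u $ j + kdelta j k * u $ i) / 3)"

definition harm :: "tensor3 \<Rightarrow> tensor3" where
  "harm e = sym_part e - (3/5) *\<^sub>R q_odot (trace_vec e)"

definition d2 :: "tensor3 \<Rightarrow> tensor2" where
  "d2 h = (\<chi> i j. \<Sum>k\<in>UNIV. \<Sum>l\<in>UNIV. h $ i $ k $ l * h $ k $ l $ j)"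

definition tr2 :: "tensor2 \<Rightarrow> real" where
  "tr2 m = (\<Sum>i\<in>UNIV. m $ i $ i)"

definition dev :: "tensor2 \<Rightarrow> tensor2" where
  "dev m = m - (tr2 m / 3) *\<^sub>R (\<chi> i j. kdelta i j)"

definition tetra :: "(real^3) set" where
  "tetra = {vector [1,1,1], vector [1,-1,-1], vector [-1,1,-1], vector [-1,-1,1]}"

definition Ominus :: "tensor2 set" where
  "Ominus = {g \<in> O3. (\<lambda>v. g *v v) ` tetra = tetra}"

definition sym_group :: "tensor3 \<Rightarrow> tensor2 set" where
  "sym_group e = {g \<in> O3. act g e = e}"

definition conj :: "tensor2 \<Rightarrow> tensor2 set \<Rightarrow> tensor2 set" where
  "conj g H = (\<lambda>h. g ** h ** matrix_inv g) ` H"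

definition Sigma_bar_Ominus :: "tensor3 set" where
  "Sigma_bar_Ominus = {e. \<exists>g\<in>O3. conj g Ominus \<subseteq> sym_group e}"

definition Sigma_Ominus :: "tensor3 set" where
  "Sigma_Ominus = {e. \<exists>g\<in>O3. sym_group e = conj g Ominus}"

end

theory Submission
  imports Defs
begin

text \<open>
  Let \<open>T\<close> be the tetrahedral tensor, \<open>T\<^sub>i\<^sub>j\<^sub>k = 1\<close> for distinct \<open>i, j, k\<close> and \<open>0\<close> otherwise.
  Invariance under two sign changes and two coordinate permutations lying in \<open>Ominus\<close> already
  forces a tensor to be a multiple of \<open>T\<close>, so the tensors with at least cubic symmetry are the
  rotated multiples of \<open>T\<close>. Since \<open>T\<close> is a quarter of the sum of \<open>t \<otimes> t \<otimes> t\<close> over the vertices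
  \<open>t\<close> of the tetrahedron and its cubic form is \<open>6xyz\<close>, the stabiliser of \<open>l T\<close> is exactly
  \<open>Ominus\<close> for \<open>l \<noteq> 0\<close>; and rotated multiples of \<open>T\<close> are harmonic with \<open>d2 = 2 l\<^sup>2 q\<close>.

  Conversely, let \<open>h\<close> be harmonic with isotropic \<open>d2\<close>, and rotate a maximiser of its cubic form on
  the unit sphere to \<open>e\<^sub>3\<close>. The first-order conditions at the maximum, tracelessness and the isotropy
  of \<open>d2\<close> leave either \<open>h = 0\<close> or a one-parameter family, which is exactly the rotated tetrahedral
  tensor with threefold axis \<open>e\<^sub>3\<close> turned about \<open>e\<^sub>3\<close>. Finally the open stratum only loses \<open>0\<close>,
  whose symmetry group contains \<open>-I\<close>, which no conjugate of \<open>Ominus\<close> does.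
\<close>

lemma sum_pull_inside2:
  "(\<Sum>k\<in>K. \<Sum>a\<in>A. \<Sum>b\<in>B. f k a b) = (\<Sum>a\<in>A. \<Sum>b\<in>B. \<Sum>k\<in>K. f k a b)"
  by (rule trans[OF sum.swap], rule sum.cong[OF refl], rule sum.swap)

lemma sum_pull_inside3:
  "(\<Sum>k\<in>K. \<Sum>a\<in>A. \<Sum>b\<in>B. \<Sum>c\<in>C. f k a b c) = (\<Sum>a\<in>A. \<Sum>b\<in>B. \<Sum>c\<in>C. \<Sum>k\<in>K. f k a b c)"
  by (rule trans[OF sum.swap], rule sum.cong[OF refl], rule sum_pull_inside2)

lemma sum_pull_inside4:
  "(\<Sum>k\<in>K. \<Sum>a\<in>A. \<Sum>b\<in>B. \<Sum>c\<in>C. \<Sum>d\<in>D. f k a b c d)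
     = (\<Sum>a\<in>A. \<Sum>b\<in>B. \<Sum>c\<in>C. \<Sum>d\<in>D. \<Sum>k\<in>K. f k a b c d)"
  by (rule trans[OF sum.swap], rule sum.cong[OF refl], rule sum_pull_inside3)

lemma sum_pull_inside5:
  "(\<Sum>k\<in>K. \<Sum>a\<in>A. \<Sum>b\<in>B. \<Sum>c\<in>C. \<Sum>d\<in>D. \<Sum>e\<in>E. f k a b c d e)
     = (\<Sum>a\<in>A. \<Sum>b\<in>B. \<Sum>c\<in>C. \<Sum>d\<in>D. \<Sum>e\<in>E. \<Sum>k\<in>K. f k a b c d e)"
  by (rule trans[OF sum.swap], rule sum.cong[OF refl], rule sum_pull_inside4)

lemma sum_pull_inside6:
  "(\<Sum>k\<in>K. \<Sum>a\<in>A. \<Sum>b\<in>B. \<Sum>c\<in>C. \<Sum>d\<in>D. \<Sum>e\<in>E. \<Sum>f\<in>F. g k a b c d e f)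
     = (\<Sum>a\<in>A. \<Sum>b\<in>B. \<Sum>c\<in>C. \<Sum>d\<in>D. \<Sum>e\<in>E. \<Sum>f\<in>F. \<Sum>k\<in>K. g k a b c d e f)"
  by (rule trans[OF sum.swap], rule sum.cong[OF refl], rule sum_pull_inside5)

lemma sum_swap_blocks3:
  "(\<Sum>a\<in>A. \<Sum>b\<in>B. \<Sum>c\<in>C. \<Sum>x\<in>X. \<Sum>y\<in>Y. \<Sum>z\<in>Z. f a b c x y z)
     = (\<Sum>x\<in>X. \<Sum>y\<in>Y. \<Sum>z\<in>Z. \<Sum>a\<in>A. \<Sum>b\<in>B. \<Sum>c\<in>C. f a b c x y z)"
  by (rule trans[OF sum_pull_inside5], rule trans[OF sum_pull_inside5], rule sum_pull_inside5)

lemma sum_product3: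
  "(\<Sum>a\<in>A. f a) * (\<Sum>b\<in>B. g b) * (\<Sum>c\<in>C. h c) = (\<Sum>a\<in>A. \<Sum>b\<in>B. \<Sum>c\<in>C. f a * g b * (h c :: real))"
proof -
  have "(\<Sum>a\<in>A. f a) * (\<Sum>b\<in>B. g b) * (\<Sum>c\<in>C. h c) = (\<Sum>a\<in>A. f a) * (\<Sum>b\<in>B. \<Sum>c\<in>C. g b * h c)"
    by (subst mult.assoc) (simp only: sum_product)
  also have "\<dots> = (\<Sum>a\<in>A. \<Sum>b\<in>B. f a * (\<Sum>c\<in>C. g b * h c))"
    by (rule sum_product)
  also have "\<dots> = (\<Sum>a\<in>A. \<Sum>b\<in>B. \<Sum>c\<in>C. f a * g b * h c)"
    by (simp add: sum_distrib_left mult.assoc)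
  finally show ?thesis .
qed

lemma sum_kronecker: "(\<Sum>d\<in>UNIV. (if b = d then 1 else 0) * f d) = (f (b::'a::finite) :: real)"
proof -
  have "(if b = d then 1 else 0) * f d = (if b = d then f d else 0)" for d by simp
  then show ?thesis by simp
qed

lemma sum_kronecker2:
  "(\<Sum>d\<in>UNIV. \<Sum>e\<in>UNIV. \<Sum>f\<in>UNIV. F d e f * (if b = d then 1 else 0) * (if c = e then 1 else 0))
     = (\<Sum>f\<in>UNIV. F (b::'a::finite) (c::'b::finite) f :: real)"
proof -
  have "(\<Sum>d\<in>UNIV. \<Sum>e\<in>UNIV. \<Sum>f\<in>UNIV. F d e f * (if b = d then 1 else 0) * (if c = e then 1 else 0))
    = (\<Sum>d\<in>UNIV. (if b = d then 1 else 0) * (\<Sum>e\<in>UNIV. (if c = e then 1 else 0) * (\<Sum>f\<in>UNIV. F d e f)))"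
    by (simp add: sum_distrib_left sum_distrib_right mult_ac)
  then show ?thesis by (simp only: sum_kronecker)
qed

lemma O3_transpose_mult: "g \<in> O3 \<Longrightarrow> transpose g ** g = mat 1"
  and O3_mult_transpose: "g \<in> O3 \<Longrightarrow> g ** transpose g = mat 1"
  by (simp_all add: O3_def orthogonal_matrix_def)

lemma O3_columns_orthonormal:
  assumes "g \<in> O3" shows "(\<Sum>k\<in>UNIV. g$k$b * g$k$c) = (if b = c then 1 else 0)"
proof -
  have "(transpose g ** g)$b$c = mat 1 $b$c" using O3_transpose_mult[OF assms] by simp
  then show ?thesis by (simp add: matrix_matrix_mult_def transpose_def mat_def)
qed

lemma O3_transpose: "g \<in> O3 \<Longrightarrow> transpose g \<in> O3"
  by (simp add: O3_def)

lemma O3_mult: "g \<in> O3 \<Longrightarrow> h \<in> O3 \<Longrightarrow> g ** h \<in> O3"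
  by (simp add: O3_def orthogonal_matrix_mul)

lemma matrix_inv_O3: assumes "g \<in> O3" shows "matrix_inv g = transpose g"
  unfolding matrix_inv_def
proof (rule some_equality)
  show "g ** transpose g = mat 1 \<and> transpose g ** g = mat 1"
    using assms by (simp add: O3_transpose_mult O3_mult_transpose)
next
  fix g' assume "g ** g' = mat 1 \<and> g' ** g = mat 1"
  then have "g' = (transpose g ** g) ** g'"
    using O3_transpose_mult[OF assms] by (simp add: matrix_mul_lid)
  also have "\<dots> = transpose g"
    using \<open>g ** g' = mat 1 \<and> g' ** g = mat 1\<close> by (simp add: matrix_mul_assoc[symmetric] matrix_mul_rid)
  finally show "g' = transpose g" .
qed

lemma norm_O3_mult: assumes "g \<in> O3" shows "norm (g *v x) = norm x"
proof -
  have "orthogonal_transformation (\<lambda>x. g *v x)"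
    using assms by (simp add: O3_def orthogonal_transformation_matrix matrix_vector_mul_linear)
  then show ?thesis by (simp add: orthogonal_transformation)
qed

lemma O3_conj_scalar:
  assumes "g \<in> O3" shows "g ** (a *\<^sub>R mat 1) ** transpose g = a *\<^sub>R mat 1"
proof -
  have "g ** (a *\<^sub>R mat 1) ** transpose g = a *\<^sub>R (g ** transpose g)"
    by (simp add: matrix_scalar_ac scalar_matrix_assoc)
  then show ?thesis using O3_mult_transpose[OF assms] by simp
qed

section \<open>The action of matrices on third-order tensors\<close>

definition totally_symmetric :: "tensor3 \<Rightarrow> bool" where
  "totally_symmetric X \<longleftrightarrow> (\<forall>i j k. X$i$j$k = X$j$i$k \<and> X$i$j$k = X$i$k$j)"

definition trace3 :: "tensor3 \<Rightarrow> real^3" where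
  "trace3 X = (\<chi> i. \<Sum>k\<in>UNIV. X$i$k$k)"

definition cubic_form :: "tensor3 \<Rightarrow> real^3 \<Rightarrow> real" where
  "cubic_form X x = (\<Sum>a\<in>UNIV. \<Sum>b\<in>UNIV. \<Sum>c\<in>UNIV. X$a$b$c * x$a * x$b * x$c)"

lemma act_mult: "act (A ** B) X = act A (act B X)"
proof -
  have "act (A ** B) X $i$j$k = act A (act B X) $i$j$k" for i j k
  proof -
    have "act (A ** B) X $i$j$k = (\<Sum>a\<in>UNIV. \<Sum>b\<in>UNIV. \<Sum>c\<in>UNIV. \<Sum>x\<in>UNIV. \<Sum>y\<in>UNIV. \<Sum>z\<in>UNIV.
        A$i$x * A$j$y * A$k$z * (B$x$a * B$y$b * B$z$c * X$a$b$c))"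
      unfolding act_def matrix_matrix_mult_def vec_lambda_beta
      unfolding sum_product3 unfolding sum_distrib_right
      by (simp add: mult_ac)
    also have "\<dots> = (\<Sum>x\<in>UNIV. \<Sum>y\<in>UNIV. \<Sum>z\<in>UNIV. \<Sum>a\<in>UNIV. \<Sum>b\<in>UNIV. \<Sum>c\<in>UNIV.
        A$i$x * A$j$y * A$k$z * (B$x$a * B$y$b * B$z$c * X$a$b$c))"
      by (rule sum_swap_blocks3)
    also have "\<dots> = act A (act B X) $i$j$k"
      by (simp add: act_def sum_distrib_left)
    finally show ?thesis .
  qed
  then show ?thesis by (simp add: vec_eq_iff)
qed

lemma act_id: "act (mat 1) X = X"
proof -
  have "act (mat 1) X $i$j$k = X$i$j$k" for i j k
  proof -
    have "act (mat 1) X $i$j$k = (\<Sum>a\<in>UNIV. (if i = a then 1 else 0) * (\<Sum>b\<in>UNIV. (if j = b then 1 else 0)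
            * (\<Sum>c\<in>UNIV. (if k = c then 1 else 0) * X$a$b$c)))"
      by (simp add: act_def mat_def sum_distrib_left mult_ac)
    then show ?thesis by (simp only: sum_kronecker)
  qed
  then show ?thesis by (simp add: vec_eq_iff)
qed

lemma act_transpose_act: "g \<in> O3 \<Longrightarrow> act (transpose g) (act g X) = X"
  and act_act_transpose: "g \<in> O3 \<Longrightarrow> act g (act (transpose g) X) = X"
  by (simp_all add: act_mult[symmetric] O3_transpose_mult O3_mult_transpose act_id)

lemma linear_act: "linear (act g)"
  by (rule linearI) (simp_all add: act_def vec_eq_iff algebra_simps sum.distrib sum_distrib_left)

lemmas act_scaleR = linear_scale[OF linear_act]
  and act_zero = linear_0[OF linear_act]
  and act_sum = linear_sum[OF linear_act]

lemma totally_symmetric_act: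
  assumes "totally_symmetric X" shows "totally_symmetric (act g X)"
proof -
  have "act g X $j$i$k = act g X $i$j$k" "act g X $i$k$j = act g X $i$j$k" for i j k
  proof -
    have "act g X $j$i$k = (\<Sum>b\<in>UNIV. \<Sum>a\<in>UNIV. \<Sum>c\<in>UNIV. g$j$a * g$i$b * g$k$c * X$a$b$c)"
      unfolding act_def by (simp only: vec_lambda_beta, rule sum.swap)
    then show "act g X $j$i$k = act g X $i$j$k"
      using assms by (simp add: act_def totally_symmetric_def mult_ac)
    have "act g X $i$k$j = (\<Sum>a\<in>UNIV. \<Sum>c\<in>UNIV. \<Sum>b\<in>UNIV. g$i$a * g$k$b * g$j$c * X$a$b$c)"
      unfolding act_def by (simp only: vec_lambda_beta, rule sum.cong[OF refl], rule sum.swap)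
    then show "act g X $i$k$j = act g X $i$j$k"
      using assms by (simp add: act_def totally_symmetric_def mult_ac)
  qed
  then show ?thesis by (simp add: totally_symmetric_def)
qed

lemma totally_symmetric_scaleR: "totally_symmetric X \<Longrightarrow> totally_symmetric (a *\<^sub>R X)"
  by (simp add: totally_symmetric_def)

lemma totally_symmetric_perms:
  assumes "totally_symmetric h"
  shows "h$i$j$k = h$j$i$k" "h$i$j$k = h$i$k$j" "h$i$j$k = h$k$j$i" "h$i$j$k = h$j$k$i" "h$i$j$k = h$k$i$j"
  using assms unfolding totally_symmetric_def by metis+

lemma trace3_scaleR: "trace3 (a *\<^sub>R X) = a *\<^sub>R trace3 X"
  by (simp add: trace3_def vec_eq_iff sum_distrib_left)

lemma d2_scaleR: "d2 (a *\<^sub>R X) = a\<^sup>2 *\<^sub>R d2 X"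
  by (simp add: d2_def vec_eq_iff sum_distrib_left power2_eq_square mult_ac)

lemma trace3_act: assumes "g \<in> O3" shows "trace3 (act g X) = g *v trace3 X"
proof -
  have "trace3 (act g X) $ i = (g *v trace3 X) $ i" for i
  proof -
    have "trace3 (act g X) $ i
        = (\<Sum>a\<in>UNIV. \<Sum>b\<in>UNIV. \<Sum>c\<in>UNIV. \<Sum>k\<in>UNIV. g$i$a * g$k$b * g$k$c * X$a$b$c)"
      unfolding trace3_def act_def by (simp only: vec_lambda_beta, rule sum_pull_inside3)
    also have "\<dots> = (\<Sum>a\<in>UNIV. \<Sum>b\<in>UNIV. \<Sum>c\<in>UNIV. g$i$a * X$a$b$c * (\<Sum>k\<in>UNIV. g$k$b * g$k$c))"
      by (simp add: sum_distrib_left mult_ac)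
    also have "\<dots> = (g *v trace3 X) $ i"
      by (simp add: O3_columns_orthonormal[OF assms] trace3_def matrix_vector_mult_def
          sum_distrib_left if_distrib cong: if_cong)
    finally show ?thesis .
  qed
  then show ?thesis by (simp add: vec_eq_iff)
qed

lemma d2_act: assumes "g \<in> O3" shows "d2 (act g X) = g ** d2 X ** transpose g"
proof -
  have "d2 (act g X) $i$j = (g ** d2 X ** transpose g) $i$j" for i j
  proof -
    have "d2 (act g X) $i$j = (\<Sum>k\<in>UNIV. \<Sum>l\<in>UNIV. \<Sum>a\<in>UNIV. \<Sum>b\<in>UNIV. \<Sum>c\<in>UNIV. \<Sum>d\<in>UNIV. \<Sum>e\<in>UNIV. \<Sum>f\<in>UNIV.
        (g$i$a * g$k$b * g$l$c * X$a$b$c) * (g$k$d * g$l$e * g$j$f * X$d$e$f))"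
      unfolding d2_def act_def vec_lambda_beta sum_distrib_right by (simp only: sum_distrib_left)
    also have "\<dots> = (\<Sum>a\<in>UNIV. \<Sum>b\<in>UNIV. \<Sum>c\<in>UNIV. \<Sum>d\<in>UNIV. \<Sum>e\<in>UNIV. \<Sum>f\<in>UNIV. \<Sum>k\<in>UNIV. \<Sum>l\<in>UNIV.
        (g$i$a * g$k$b * g$l$c * X$a$b$c) * (g$k$d * g$l$e * g$j$f * X$d$e$f))"
      by (rule trans[OF sum.cong[OF refl sum_pull_inside6] sum_pull_inside6])
    also have "\<dots> = (\<Sum>a\<in>UNIV. \<Sum>b\<in>UNIV. \<Sum>c\<in>UNIV. \<Sum>d\<in>UNIV. \<Sum>e\<in>UNIV. \<Sum>f\<in>UNIV.
        g$i$a * g$j$f * X$a$b$c * X$d$e$f * (\<Sum>k\<in>UNIV. g$k$b * g$k$d) * (\<Sum>l\<in>UNIV. g$l$c * g$l$e))"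
      by (simp add: sum_distrib_left sum_distrib_right mult_ac)
    also have "\<dots> = (\<Sum>a\<in>UNIV. \<Sum>b\<in>UNIV. \<Sum>c\<in>UNIV. \<Sum>f\<in>UNIV. g$i$a * g$j$f * X$a$b$c * X$b$c$f)"
      by (simp only: O3_columns_orthonormal[OF assms] sum_kronecker2)
    also have "\<dots> = (\<Sum>f\<in>UNIV. \<Sum>a\<in>UNIV. \<Sum>b\<in>UNIV. \<Sum>c\<in>UNIV. g$i$a * g$j$f * X$a$b$c * X$b$c$f)"
      by (rule sum_pull_inside3[symmetric])
    also have "\<dots> = (g ** d2 X ** transpose g) $i$j"
      by (simp add: d2_def matrix_matrix_mult_def transpose_def sum_distrib_left sum_distrib_right mult_ac)
    finally show ?thesis .
  qed
  then show ?thesis by (simp add: vec_eq_iff)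
qed

lemma cubic_form_act: "cubic_form (act g X) x = cubic_form X (transpose g *v x)"
proof -
  have "cubic_form (act g X) x = (\<Sum>i\<in>UNIV. \<Sum>j\<in>UNIV. \<Sum>k\<in>UNIV. \<Sum>a\<in>UNIV. \<Sum>b\<in>UNIV. \<Sum>c\<in>UNIV.
      g$i$a * g$j$b * g$k$c * X$a$b$c * x$i * x$j * x$k)"
    by (simp add: cubic_form_def act_def sum_distrib_right)
  also have "\<dots> = (\<Sum>a\<in>UNIV. \<Sum>b\<in>UNIV. \<Sum>c\<in>UNIV. \<Sum>i\<in>UNIV. \<Sum>j\<in>UNIV. \<Sum>k\<in>UNIV.
      g$i$a * g$j$b * g$k$c * X$a$b$c * x$i * x$j * x$k)"
    by (rule sum_swap_blocks3)
  also have "\<dots> = cubic_form X (transpose g *v x)"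
    unfolding cubic_form_def matrix_vector_mult_def transpose_def vec_lambda_beta sum_product3[symmetric]
    by (simp add: sum_distrib_left sum_distrib_right mult_ac)
  finally show ?thesis .
qed

lemma cubic_form_scaleR: "cubic_form X (t *\<^sub>R x) = t^3 * cubic_form X x"
  by (simp add: cubic_form_def sum_distrib_left power3_eq_cube mult_ac)

lemma sym_group_act:
  assumes g: "g \<in> O3" shows "sym_group (act g X) = conj g (sym_group X)"
  unfolding conj_def matrix_inv_O3[OF g]
proof (intro equalityI subsetI)
  fix k assume "k \<in> sym_group (act g X)"
  then have k: "k \<in> O3" "act k (act g X) = act g X" by (auto simp: sym_group_def)
  let ?h = "transpose g ** k ** g"
  have "act ?h X = act (transpose g) (act k (act g X))" by (simp add: act_mult)
  also have "\<dots> = X" using k(2) act_transpose_act[OF g] by simp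
  finally have "?h \<in> sym_group X" using k(1) g by (simp add: sym_group_def O3_mult O3_transpose)
  moreover have "k = g ** ?h ** transpose g"
    using O3_mult_transpose[OF g]
    by (simp add: matrix_mul_assoc[symmetric] matrix_mul_lid) (simp add: matrix_mul_assoc matrix_mul_rid)
  ultimately show "k \<in> (\<lambda>h. g ** h ** transpose g) ` sym_group X" by blast
next
  fix k assume "k \<in> (\<lambda>h. g ** h ** transpose g) ` sym_group X"
  then obtain h where h: "h \<in> O3" "act h X = X" and k: "k = g ** h ** transpose g"
    by (auto simp: sym_group_def)
  have "act k (act g X) = act g (act h (act (transpose g) (act g X)))" by (simp add: k act_mult)
  also have "\<dots> = act g X" using h(2) act_transpose_act[OF g] by simp
  finally show "k \<in> sym_group (act g X)" using k h(1) g by (simp add: sym_group_def O3_mult O3_transpose)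
qed

section \<open>The tetrahedral tensor and its stabiliser\<close>

definition outer3 :: "real^3 \<Rightarrow> tensor3" where
  "outer3 v = (\<chi> i j k. v$i * v$j * v$k)"

lemma act_outer3: "act g (outer3 v) = outer3 (g *v v)"
proof -
  have "act g (outer3 v) $i$j$k = outer3 (g *v v) $i$j$k" for i j k
  proof -
    have "act g (outer3 v) $i$j$k
        = (\<Sum>a\<in>UNIV. \<Sum>b\<in>UNIV. \<Sum>c\<in>UNIV. (g$i$a * v$a) * (g$j$b * v$b) * (g$k$c * v$c))"
      by (simp add: act_def outer3_def mult_ac)
    also have "\<dots> = outer3 (g *v v) $i$j$k"
      by (simp only: sum_product3[symmetric]) (simp add: outer3_def matrix_vector_mult_def)
    finally show ?thesis .
  qed
  then show ?thesis by (simp add: vec_eq_iff)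
qed

definition tetra_tensor :: tensor3 where
  "tetra_tensor = (\<chi> i j k. if i \<noteq> j \<and> j \<noteq> k \<and> i \<noteq> k then 1 else 0)"

lemma totally_symmetric_tetra_tensor: "totally_symmetric tetra_tensor"
  by (auto simp: totally_symmetric_def tetra_tensor_def)

lemma trace3_tetra_tensor: "trace3 tetra_tensor = 0"
  by (simp add: trace3_def tetra_tensor_def vec_eq_iff)

lemma d2_tetra_tensor: "d2 tetra_tensor = 2 *\<^sub>R mat 1"
  unfolding vec_eq_iff forall_3 by (simp add: d2_def tetra_tensor_def mat_def sum_3)

lemma cubic_form_tetra_tensor: "cubic_form tetra_tensor x = 6 * (x$1 * x$2 * x$3)"
  by (simp add: cubic_form_def tetra_tensor_def sum_3)

lemma vector3_eq_iff: "(vector [a, b, c] :: real^3) = vector [a', b', c'] \<longleftrightarrow> a = a' \<and> b = b' \<and> c = c'"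
  by (auto simp: vec_eq_iff forall_3)

lemma tetra_tensor_eq_sum_outer3: "tetra_tensor = (1/4) *\<^sub>R (\<Sum>t\<in>tetra. outer3 t)"
proof -
  have distinct: "(vector [1,1,1] :: real^3) \<notin> {vector [1,-1,-1], vector [-1,1,-1], vector [-1,-1,1]}"
    "(vector [1,-1,-1] :: real^3) \<notin> {vector [-1,1,-1], vector [-1,-1,1]}"
    "(vector [-1,1,-1] :: real^3) \<noteq> vector [-1,-1,1]"
    by (auto simp: vector3_eq_iff)
  have "(\<Sum>t\<in>tetra. outer3 t) = outer3 (vector [1,1,1]) + outer3 (vector [1,-1,-1])
      + outer3 (vector [-1,1,-1]) + outer3 (vector [-1,-1,1])"
    unfolding tetra_def using distinct by (simp add: add.assoc)
  moreover have "tetra_tensor $i$j$k = ((1/4) *\<^sub>R (outer3 (vector [1,1,1]) + outer3 (vector [1,-1,-1])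
      + outer3 (vector [-1,1,-1]) + outer3 (vector [-1,-1,1]))) $i$j$k" for i j k
    using exhaust_3[of i] exhaust_3[of j] exhaust_3[of k]
    by (auto simp: tetra_tensor_def outer3_def)
  ultimately show ?thesis by (simp add: vec_eq_iff)
qed

lemma act_tetra_tensor: assumes "g \<in> Ominus" shows "act g tetra_tensor = tetra_tensor"
proof -
  have g: "g \<in> O3" and tetra: "(\<lambda>v. g *v v) ` tetra = tetra" using assms by (auto simp: Ominus_def)
  have "inj (\<lambda>v. g *v v)"
  proof (rule injI)
    fix x y assume "g *v x = g *v y"
    then have "transpose g *v (g *v x) = transpose g *v (g *v y)" by simp
    then show "x = y" by (simp add: matrix_vector_mul_assoc O3_transpose_mult[OF g])
  qed
  then have "(\<Sum>t\<in>tetra. outer3 (g *v t)) = (\<Sum>s\<in>(\<lambda>v. g *v v) ` tetra. outer3 s)"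
    by (simp add: sum.reindex inj_on_subset[of _ UNIV])
  then show ?thesis
    by (subst (1 2) tetra_tensor_eq_sum_outer3) (simp add: act_scaleR act_sum act_outer3 tetra)
qed

lemma mem_tetra_iff:
  "v \<in> tetra \<longleftrightarrow> (v$1)\<^sup>2 = 1 \<and> (v$2)\<^sup>2 = 1 \<and> (v$3)\<^sup>2 = 1 \<and> v$1 * v$2 * v$3 = 1"
proof
  assume "(v$1)\<^sup>2 = 1 \<and> (v$2)\<^sup>2 = 1 \<and> (v$3)\<^sup>2 = 1 \<and> v$1 * v$2 * v$3 = 1"
  moreover from this have "v$1 = 1 \<or> v$1 = -1" "v$2 = 1 \<or> v$2 = -1" "v$3 = 1 \<or> v$3 = -1"
    by (auto simp: power2_eq_1_iff)
  ultimately show "v \<in> tetra"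
    unfolding tetra_def by (elim disjE) (auto simp: vec_eq_iff forall_3)
qed (auto simp: tetra_def)

lemma squares_eq_1_if_sum_squares_3_prod_1:
  fixes x y z :: real assumes "x\<^sup>2 + y\<^sup>2 + z\<^sup>2 = 3" "x * y * z = 1"
  shows "x\<^sup>2 = 1 \<and> y\<^sup>2 = 1 \<and> z\<^sup>2 = 1"
proof -
  define a b c where "a = x\<^sup>2" "b = y\<^sup>2" "c = z\<^sup>2"
  have sum: "a + b + c = 3" using assms(1) by (simp add: a_b_c_def)
  have prod: "a * b * c = 1" using assms(2) unfolding a_b_c_def by (metis power_mult_distrib one_power2)
  define e where "e = a * b + b * c + c * a"
  \<comment> \<open>Two sums of squares squeeze \<open>e\<close> to \<open>3\<close>; then the first one forces \<open>a = b = c\<close>.\<close>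
  have spread: "(a - b)\<^sup>2 + (b - c)\<^sup>2 + (c - a)\<^sup>2 = 18 - 6 * e"
  proof -
    have "(a - b)\<^sup>2 + (b - c)\<^sup>2 + (c - a)\<^sup>2 = 2 * (a + b + c)\<^sup>2 - 6 * e"
      by (simp add: e_def power2_eq_square algebra_simps)
    then show ?thesis using sum by simp
  qed
  have "(a * b - b * c)\<^sup>2 + (b * c - c * a)\<^sup>2 + (c * a - a * b)\<^sup>2 = 2 * e\<^sup>2 - 6 * (a * b * c) * (a + b + c)"
    by (simp add: e_def power2_eq_square algebra_simps)
  then have "(a * b - b * c)\<^sup>2 + (b * c - c * a)\<^sup>2 + (c * a - a * b)\<^sup>2 = 2 * e\<^sup>2 - 18"
    using sum prod by simp
  then have "2 * e\<^sup>2 - 18 \<ge> 0"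
    using zero_le_power2[of "a * b - b * c"] zero_le_power2[of "b * c - c * a"]
      zero_le_power2[of "c * a - a * b"] by linarith
  then have "3\<^sup>2 \<le> e\<^sup>2" by simp
  moreover have "e \<ge> 0" by (simp add: e_def a_b_c_def)
  ultimately have "e \<ge> 3" by (rule power2_le_imp_le)
  moreover have "e \<le> 3"
    using spread zero_le_power2[of "a - b"] zero_le_power2[of "b - c"] zero_le_power2[of "c - a"] by linarith
  ultimately have "(a - b)\<^sup>2 + (b - c)\<^sup>2 + (c - a)\<^sup>2 = 0" using spread by simp
  then have "(a - b)\<^sup>2 = 0" "(b - c)\<^sup>2 = 0"
    using zero_le_power2[of "a - b"] zero_le_power2[of "b - c"] zero_le_power2[of "c - a"] by linarith+
  then have "a = b" "b = c" by simp_all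
  then show ?thesis using sum by (simp add: a_b_c_def)
qed

\<comment> \<open>By AM-GM the vertices are the only points of norm \<open>\<surd>3\<close> with \<open>xyz = 1\<close>; \<open>g\<close> preserves the
  norm and, by hypothesis, the cubic form \<open>6xyz\<close>.\<close>
lemma O3_map_tetra:
  assumes g: "g \<in> O3" and "\<And>x. cubic_form tetra_tensor (g *v x) = cubic_form tetra_tensor x"
    and t: "t \<in> tetra"
  shows "g *v t \<in> tetra"
proof -
  let ?s = "g *v t"
  have norm_sq: "norm v ^ 2 = (v$1)\<^sup>2 + (v$2)\<^sup>2 + (v$3)\<^sup>2" for v :: "real^3"
    by (simp only: power2_norm_eq_inner) (simp add: inner_vec_def sum_3 power2_eq_square)
  have "norm ?s ^ 2 = norm t ^ 2" using norm_O3_mult[OF g] by simp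
  then have "(?s$1)\<^sup>2 + (?s$2)\<^sup>2 + (?s$3)\<^sup>2 = 3"
    using t unfolding norm_sq mem_tetra_iff by simp
  moreover have "?s$1 * ?s$2 * ?s$3 = 1"
    using assms(2)[of t] t by (simp add: cubic_form_tetra_tensor mem_tetra_iff)
  ultimately show ?thesis using squares_eq_1_if_sum_squares_3_prod_1 mem_tetra_iff by blast
qed

lemma stabilizer_tetra_tensor:
  assumes g: "g \<in> O3" and fixed: "act g tetra_tensor = tetra_tensor" shows "g \<in> Ominus"
proof -
  have "act (transpose g) tetra_tensor = tetra_tensor"
    using act_transpose_act[OF g, of tetra_tensor] fixed by simp
  then have "cubic_form tetra_tensor (g *v x) = cubic_form tetra_tensor x" for x
    using cubic_form_act[of "transpose g" tetra_tensor x] by simp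
  then have into: "(\<lambda>v. g *v v) ` tetra \<subseteq> tetra" using O3_map_tetra[OF g] by blast
  have "cubic_form tetra_tensor (transpose g *v x) = cubic_form tetra_tensor x" for x
    using cubic_form_act[of g tetra_tensor x] fixed by simp
  then have "transpose g *v t \<in> tetra" if "t \<in> tetra" for t
    using O3_map_tetra[OF O3_transpose[OF g]] that by blast
  moreover have "g *v (transpose g *v t) = t" for t
    by (simp only: matrix_vector_mul_assoc O3_mult_transpose[OF g] matrix_vector_mul_lid)
  ultimately have "tetra \<subseteq> (\<lambda>v. g *v v) ` tetra" by (metis image_eqI subsetI)
  with into g show ?thesis by (simp add: Ominus_def)
qed

lemma sym_group_tetra_tensor:
  assumes "l \<noteq> 0" shows "sym_group (l *\<^sub>R tetra_tensor) = Ominus"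
  using assms stabilizer_tetra_tensor act_tetra_tensor
  by (auto simp: sym_group_def Ominus_def act_scaleR)

section \<open>Tensors invariant under \<open>Ominus\<close>\<close>

definition signed_perm_matrix :: "(3 \<Rightarrow> 3) \<Rightarrow> (3 \<Rightarrow> real) \<Rightarrow> real^3^3" where
  "signed_perm_matrix \<sigma> s = (\<chi> i j. if j = \<sigma> i then s i else 0)"

lemma signed_perm_matrix_nth: "signed_perm_matrix \<sigma> s $i$j = s i * (if \<sigma> i = j then 1 else 0)"
  by (auto simp: signed_perm_matrix_def)

lemma act_signed_perm_matrix:
  "act (signed_perm_matrix \<sigma> s) X $i$j$k = s i * s j * s k * X$(\<sigma> i)$(\<sigma> j)$(\<sigma> k)"
proof -
  have "act (signed_perm_matrix \<sigma> s) X $i$j$k = (\<Sum>a\<in>UNIV. (if \<sigma> i = a then 1 else 0) *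
      (\<Sum>b\<in>UNIV. (if \<sigma> j = b then 1 else 0) * (\<Sum>c\<in>UNIV. (if \<sigma> k = c then 1 else 0) * (s i * s j * s k * X$a$b$c))))"
    unfolding act_def vec_lambda_beta signed_perm_matrix_nth by (simp add: sum_distrib_left mult_ac)
  then show ?thesis by (simp only: sum_kronecker)
qed

lemma signed_perm_matrix_mult_vec: "signed_perm_matrix \<sigma> s *v v = vector [s 1 * v$\<sigma> 1, s 2 * v$\<sigma> 2, s 3 * v$\<sigma> 3]"
proof -
  have "(signed_perm_matrix \<sigma> s *v v)$i = s i * v$\<sigma> i" for i
  proof -
    have "(signed_perm_matrix \<sigma> s *v v)$i = (\<Sum>j\<in>UNIV. (if \<sigma> i = j then 1 else 0) * (s i * v$j))"
      by (simp add: matrix_vector_mult_def signed_perm_matrix_nth mult_ac)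
    then show ?thesis by (simp only: sum_kronecker)
  qed
  then show ?thesis by (simp add: vec_eq_iff forall_3)
qed

lemma Ominus_generators:
  "signed_perm_matrix id (\<lambda>i. if i = 1 then 1 else -1) \<in> Ominus" (is "?D1 \<in> _")
  "signed_perm_matrix id (\<lambda>i. if i = 2 then 1 else -1) \<in> Ominus" (is "?D2 \<in> _")
  "signed_perm_matrix (\<lambda>i. if i = 1 then 2 else if i = 2 then 3 else 1) (\<lambda>_. 1) \<in> Ominus" (is "?C \<in> _")
  "signed_perm_matrix (\<lambda>i. if i = 1 then 2 else if i = 2 then 1 else 3) (\<lambda>_. 1) \<in> Ominus" (is "?S \<in> _")
proof -
  have "?D1 \<in> O3" "?D2 \<in> O3" "?C \<in> O3" "?S \<in> O3"
    unfolding O3_def mem_Collect_eq orthogonal_matrix vec_eq_iff forall_3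
    by (simp_all add: matrix_matrix_mult_def transpose_def mat_def sum_3 signed_perm_matrix_def)
  moreover have "(\<lambda>v. ?D1 *v v) ` tetra = tetra" "(\<lambda>v. ?D2 *v v) ` tetra = tetra"
    "(\<lambda>v. ?C *v v) ` tetra = tetra" "(\<lambda>v. ?S *v v) ` tetra = tetra"
    unfolding tetra_def by (simp_all add: signed_perm_matrix_mult_vec vector3_eq_iff insert_commute)
  ultimately show "?D1 \<in> Ominus" "?D2 \<in> Ominus" "?C \<in> Ominus" "?S \<in> Ominus"
    by (simp_all add: Ominus_def)
qed

lemma Ominus_invariant_eq_tetra_tensor:
  assumes "\<And>r. r \<in> Ominus \<Longrightarrow> act r X = X" shows "X = X$1$2$3 *\<^sub>R tetra_tensor"
proof -
  have inv: "s i * s j * s k * X$(\<sigma> i)$(\<sigma> j)$(\<sigma> k) = X$i$j$k"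
    if "signed_perm_matrix \<sigma> s \<in> Ominus" for \<sigma> s i j k
    using assms[OF that] act_signed_perm_matrix[of \<sigma> s X i j k] by simp
  define s1 s2 :: "3 \<Rightarrow> real"
    where "s1 = (\<lambda>i. if i = 1 then 1 else -1)" and "s2 = (\<lambda>i. if i = 2 then 1 else -1)"
  define cyc swp :: "3 \<Rightarrow> 3"
    where "cyc = (\<lambda>i. if i = 1 then 2 else if i = 2 then 3 else 1)"
      and "swp = (\<lambda>i. if i = 1 then 2 else if i = 2 then 1 else 3)"
  note generators = Ominus_generators[folded s1_def s2_def cyc_def swp_def]
  have signs: "(1 - s1 i * s1 j * s1 k) * X$i$j$k = 0" "(1 - s2 i * s2 j * s2 k) * X$i$j$k = 0" for i j k
    using inv[OF generators(1), of i j k] inv[OF generators(2), of i j k] by (simp_all add: algebra_simps)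
  have perms: "X$2$3$1 = X$1$2$3" "X$3$1$2 = X$1$2$3" "X$2$1$3 = X$1$2$3"
    "X$1$3$2 = X$1$2$3" "X$3$2$1 = X$1$2$3"
    using inv[OF generators(3), of 1 2 3] inv[OF generators(3), of 2 3 1]
      inv[OF generators(4), of 1 2 3] inv[OF generators(4), of 2 3 1] inv[OF generators(4), of 3 1 2]
    by (simp_all add: cyc_def swp_def)
  have "X$i$j$k = (X$1$2$3 *\<^sub>R tetra_tensor)$i$j$k" for i j k
    using exhaust_3[of i] exhaust_3[of j] exhaust_3[of k] signs[of i j k]
    by (elim disjE) (simp_all add: tetra_tensor_def s1_def s2_def perms)
  then show ?thesis unfolding vec_eq_iff by blast
qed

lemma conj_Ominus_symmetry_imp_rotated_tetra_tensor:
  assumes g: "g \<in> O3" and sub: "conj g Ominus \<subseteq> sym_group e"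
  shows "\<exists>l. e = act g (l *\<^sub>R tetra_tensor)"
proof -
  let ?e' = "act (transpose g) e"
  have "act r ?e' = ?e'" if r: "r \<in> Ominus" for r
  proof -
    have "g ** r ** transpose g \<in> sym_group e" using sub r unfolding conj_def matrix_inv_O3[OF g] by blast
    then have "act (g ** r ** transpose g) e = e" by (simp add: sym_group_def)
    moreover have "act r ?e' = act (transpose g) (act (g ** r ** transpose g) e)"
      by (simp add: act_mult[symmetric] matrix_mul_assoc O3_transpose_mult[OF g] matrix_mul_lid)
    ultimately show ?thesis by simp
  qed
  then have "?e' = ?e'$1$2$3 *\<^sub>R tetra_tensor" by (rule Ominus_invariant_eq_tetra_tensor)
  then have "e = act g (?e'$1$2$3 *\<^sub>R tetra_tensor)" by (metis act_act_transpose[OF g])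
  then show ?thesis ..
qed

section \<open>Harmonic tensors with isotropic \<open>d2\<close>\<close>

lemma linear_coeff_zero_if_dominated:
  fixes a b c m :: real
  assumes le: "\<And>t. m + 3*a*t + 3*b*t\<^sup>2 + c*t^3 \<le> m * sqrt (1 + t\<^sup>2) ^ 3"
  shows "a = 0"
proof -
  define f where "f t = m * sqrt (1 + t\<^sup>2) ^ 3 - (m + 3*a*t + 3*b*t\<^sup>2 + c*t^3)" for t
  have deriv: "(f has_real_derivative - 3 * a) (at 0)"
    unfolding f_def by (auto intro!: derivative_eq_intros)
  have min: "\<forall>t. \<bar>0 - t\<bar> < 1 \<longrightarrow> f 0 \<le> f t"
    using le by (simp add: f_def)
  have "- 3 * a = 0" by (rule DERIV_local_min[OF deriv zero_less_one min])
  then show ?thesis by simp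
qed

lemma totally_symmetric_sorted_indices:
  assumes "totally_symmetric h"
  shows "h$1$2$1 = h$1$1$2" "h$1$3$1 = h$1$1$3" "h$1$3$2 = h$1$2$3" "h$2$1$1 = h$1$1$2"
    "h$2$1$2 = h$1$2$2" "h$2$1$3 = h$1$2$3" "h$2$2$1 = h$1$2$2" "h$2$3$1 = h$1$2$3"
    "h$2$3$2 = h$2$2$3" "h$3$1$1 = h$1$1$3" "h$3$1$2 = h$1$2$3" "h$3$1$3 = h$1$3$3"
    "h$3$2$1 = h$1$2$3" "h$3$2$2 = h$2$2$3" "h$3$2$3 = h$2$3$3" "h$3$3$1 = h$1$3$3" "h$3$3$2 = h$2$3$3"
  using totally_symmetric_perms[OF assms] by metis+

lemma totally_symmetric_eq_0I:
  assumes "totally_symmetric h"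
    and "h$1$1$1 = 0" "h$2$2$2 = 0" "h$3$3$3 = 0" "h$1$1$2 = 0" "h$1$1$3 = 0"
    "h$1$2$2 = 0" "h$1$3$3 = 0" "h$2$2$3 = 0" "h$2$3$3 = 0" "h$1$2$3 = 0"
  shows "h = 0"
  unfolding vec_eq_iff forall_3
  using assms(2-) totally_symmetric_sorted_indices[OF assms(1)] by simp

lemma totally_symmetric_eqI:
  assumes "totally_symmetric X" "totally_symmetric Y"
    and "X$1$1$1 = Y$1$1$1" "X$2$2$2 = Y$2$2$2" "X$3$3$3 = Y$3$3$3" "X$1$1$2 = Y$1$1$2"
    "X$1$1$3 = Y$1$1$3" "X$1$2$2 = Y$1$2$2" "X$1$3$3 = Y$1$3$3" "X$2$2$3 = Y$2$2$3"
    "X$2$3$3 = Y$2$3$3" "X$1$2$3 = Y$1$2$3"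
  shows "X = Y"
proof -
  have "totally_symmetric (X - Y)" using assms(1,2) by (simp add: totally_symmetric_def)
  then have "X - Y = 0" by (rule totally_symmetric_eq_0I) (simp_all add: assms(3-))
  then show ?thesis by simp
qed

lemma cubic_form_coords:
  assumes "totally_symmetric h"
  shows "cubic_form h (vector [x, y, z]) = h$1$1$1 * x^3 + h$2$2$2 * y^3 + h$3$3$3 * z^3
    + 3 * h$1$1$2 * x\<^sup>2 * y + 3 * h$1$1$3 * x\<^sup>2 * z + 3 * h$1$2$2 * x * y\<^sup>2 + 3 * h$1$3$3 * x * z\<^sup>2
    + 3 * h$2$2$3 * y\<^sup>2 * z + 3 * h$2$3$3 * y * z\<^sup>2 + 6 * h$1$2$3 * x * y * z"
  by (simp add: cubic_form_def sum_3 totally_symmetric_sorted_indices[OF assms]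
      power2_eq_square power3_eq_cube algebra_simps)

lemma trace3_eq_0_coords:
  assumes "totally_symmetric h" "trace3 h = 0"
  shows "h$1$1$1 + h$1$2$2 + h$1$3$3 = 0" "h$1$1$2 + h$2$2$2 + h$2$3$3 = 0"
    "h$1$1$3 + h$2$2$3 + h$3$3$3 = 0"
  using assms(2) unfolding vec_eq_iff
  by (simp_all add: forall_3 trace3_def sum_3 totally_symmetric_sorted_indices[OF assms(1)])

lemma norm_vector3: "norm (vector [x, y, z] :: real^3) = sqrt (x\<^sup>2 + y\<^sup>2 + z\<^sup>2)"
  by (simp add: norm_eq_sqrt_inner inner_vec_def sum_3 power2_eq_square)

lemma axis_maximum_first_order:
  assumes sy: "totally_symmetric h"
    and le: "\<And>x. cubic_form h x \<le> m * norm x ^ 3" and top: "cubic_form h (vector [0, 0, 1]) = m"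
  shows "h$3$3$3 = m" "m \<ge> 0" "h$1$3$3 = 0" "h$2$3$3 = 0"
proof -
  note coords = cubic_form_coords[OF sy]
  show h333: "h$3$3$3 = m" using top by (simp add: coords)
  show "m \<ge> 0" using le[of "vector [0, 0, -1]"] h333 by (simp add: coords norm_vector3)
  show "h$1$3$3 = 0"
  proof (rule linear_coeff_zero_if_dominated)
    fix t :: real
    show "m + 3 * h$1$3$3 * t + 3 * h$1$1$3 * t\<^sup>2 + h$1$1$1 * t^3 \<le> m * sqrt (1 + t\<^sup>2) ^ 3"
      using le[of "vector [t, 0, 1]"] h333 by (simp add: coords norm_vector3 algebra_simps)
  qed
  show "h$2$3$3 = 0"
  proof (rule linear_coeff_zero_if_dominated)
    fix t :: real
    show "m + 3 * h$2$3$3 * t + 3 * h$2$2$3 * t\<^sup>2 + h$2$2$2 * t^3 \<le> m * sqrt (1 + t\<^sup>2) ^ 3"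
      using le[of "vector [0, t, 1]"] h333 by (simp add: coords norm_vector3 algebra_simps)
  qed
qed

lemma isotropic_axis_maximum_coeffs:
  assumes sy: "totally_symmetric h" and tr: "trace3 h = 0" and d2: "d2 h = c *\<^sub>R mat 1"
    and le: "\<And>x. cubic_form h x \<le> m * norm x ^ 3" and top: "cubic_form h (vector [0, 0, 1]) = m"
  shows "h = 0 \<or> (m > 0 \<and> h$1$2$3 = 0 \<and> h$1$1$3 = -m/2 \<and> h$2$2$3 = -m/2
    \<and> h$1$2$2 = -h$1$1$1 \<and> h$1$1$2 = -h$2$2$2 \<and> (h$1$1$1)\<^sup>2 + (h$2$2$2)\<^sup>2 = m\<^sup>2/2)"
proof -
  note first_order = axis_maximum_first_order[OF sy le top]
  note traceless = trace3_eq_0_coords[OF sy tr]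
  have h122: "h$1$2$2 = -h$1$1$1" and h112: "h$1$1$2 = -h$2$2$2"
    using traceless(1,2) first_order(3,4) by simp_all
  have h333: "h$3$3$3 = - h$1$1$3 - h$2$2$3" using traceless(3) by simp
  let ?A = "h$1$1$1" and ?B = "h$2$2$2" and ?C = "h$1$1$3" and ?D = "h$1$2$3" and ?E = "h$2$2$3"
  note d2_coords = d2_def sum_3 totally_symmetric_sorted_indices[OF sy] first_order(3,4) h122 h112 h333
  have "d2 h $1$1 = d2 h $2$2" "d2 h $1$1 = d2 h $3$3" "d2 h $1$2 = 0"
    using d2 by (simp_all add: mat_def)
  then have d2_11_22: "?C * ?C = ?E * ?E"
    and d2_11_33: "?A * ?A + ?B * ?B = ?C * ?E + ?E * ?E"
    and d2_12: "?D * (?C + ?E) = 0"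
    by (simp_all add: d2_coords algebra_simps)
  have CE: "?C + ?E = - m" using first_order(1) h333 by simp
  show ?thesis
  proof (cases "m = 0")
    case False
    then have m: "m > 0" using first_order(2) by simp
    have D: "?D = 0" using d2_12 CE m by simp
    have "(?C - ?E) * (?C + ?E) = 0" using d2_11_22 by (simp add: algebra_simps)
    then have "?C = ?E" using CE m by simp
    then have C: "?C = -m/2" "?E = -m/2" using CE by simp_all
    have "?A\<^sup>2 + ?B\<^sup>2 = m\<^sup>2/2" using d2_11_33 C by (simp add: power2_eq_square field_simps)
    then show ?thesis using m D C h122 h112 by simp
  next
    case True
    then have E: "?E = -?C" using CE by simp
    then have "?A * ?A + ?B * ?B = 0" using d2_11_33 by simp
    then have A: "?A = 0" and B: "?B = 0" using sum_squares_eq_zero_iff by blast+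
    note coords = cubic_form_coords[OF sy] first_order(1,3,4) h122 h112 A B E True
    have "?C = 0" using le[of "vector [1, 0, 1]"] le[of "vector [1, 0, -1]"] by (simp add: coords)
    moreover have "?D = 0" using le[of "vector [1, 1, 1]"] le[of "vector [1, 1, -1]"] by (simp add: coords)
    ultimately have "h = 0"
      using first_order(1,3,4) h122 h112 A B E True by (intro totally_symmetric_eq_0I[OF sy]) simp_all
    then show ?thesis by simp
  qed
qed

definition rot_z :: "real \<Rightarrow> real \<Rightarrow> real^3^3" where
  "rot_z c s = vector [vector [c, s, 0], vector [-s, c, 0], vector [0, 0, 1]]"

lemma rot_z_O3: assumes "c\<^sup>2 + s\<^sup>2 = 1" shows "rot_z c s \<in> O3"
  unfolding O3_def mem_Collect_eq orthogonal_matrix vec_eq_iff forall_3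
  using assms by (simp add: rot_z_def matrix_matrix_mult_def transpose_def mat_def sum_3 power2_eq_square algebra_simps)

\<comment> \<open>Its third row is the threefold axis \<open>(1,1,1)/\<surd>3\<close> of the tetrahedron.\<close>
definition tetra_axis_frame :: "real^3^3" where
  "tetra_axis_frame = vector [vector [sqrt 6 / 3, - sqrt 6 / 6, - sqrt 6 / 6],
     vector [0, sqrt 2 / 2, - sqrt 2 / 2], vector [sqrt 3 / 3, sqrt 3 / 3, sqrt 3 / 3]]"

lemma sqrt_6: "sqrt 6 = sqrt 2 * sqrt 3"
  by (simp add: real_sqrt_mult[symmetric])

lemma tetra_axis_frame_O3: "tetra_axis_frame \<in> O3"
  unfolding O3_def mem_Collect_eq orthogonal_matrix vec_eq_iff forall_3
  by (simp add: tetra_axis_frame_def matrix_matrix_mult_def transpose_def mat_def sum_3 sqrt_6 field_simps)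

definition tetra_tensor_z :: tensor3 where
  "tetra_tensor_z = act tetra_axis_frame (sqrt 3 *\<^sub>R tetra_tensor)"

lemma totally_symmetric_tetra_tensor_z: "totally_symmetric tetra_tensor_z"
  unfolding tetra_tensor_z_def
  by (rule totally_symmetric_act) (use totally_symmetric_tetra_tensor in \<open>simp add: totally_symmetric_def\<close>)

lemma tetra_tensor_z_coeffs:
  "tetra_tensor_z$1$1$1 = sqrt 2" "tetra_tensor_z$1$2$2 = - sqrt 2"
  "tetra_tensor_z$1$1$3 = -1" "tetra_tensor_z$2$2$3 = -1" "tetra_tensor_z$3$3$3 = 2"
  "tetra_tensor_z$1$1$2 = 0" "tetra_tensor_z$2$2$2 = 0" "tetra_tensor_z$1$2$3 = 0"
  "tetra_tensor_z$1$3$3 = 0" "tetra_tensor_z$2$3$3 = 0"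
  by (simp_all add: tetra_tensor_z_def act_def tetra_axis_frame_def tetra_tensor_def sum_3 sqrt_6 field_simps)
    (simp_all add: mult.assoc[symmetric])

lemma rotated_tetra_tensor_z:
  assumes sy: "totally_symmetric h" and cs: "c\<^sup>2 + s\<^sup>2 = 1"
    and "h$1$3$3 = 0" "h$2$3$3 = 0" "h$1$2$3 = 0" "h$1$1$3 = -k" "h$2$2$3 = -k" "h$3$3$3 = 2*k"
      "h$1$2$2 = -h$1$1$1" "h$1$1$2 = -h$2$2$2"
      "h$1$1$1 = sqrt 2 * k * (4 * c^3 - 3 * c)" "h$2$2$2 = sqrt 2 * k * (3 * s - 4 * s^3)"
  shows "h = act (rot_z c s) (k *\<^sub>R tetra_tensor_z)"
  using assms(3-)
  by (intro totally_symmetric_eqI[OF sy] totally_symmetric_act totally_symmetric_scaleR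
        totally_symmetric_tetra_tensor_z;
      simp add: act_def rot_z_def sum_3 tetra_tensor_z_coeffs
        totally_symmetric_sorted_indices[OF totally_symmetric_tetra_tensor_z];
      use cs in algebra)

lemma sin_treble_sin: "sin (3 * x) = 3 * sin x - 4 * sin x ^ 3" for x :: real
proof -
  have "sin (3 * x) = 2 * sin x * cos x * cos x + (cos x ^ 2 - sin x ^ 2) * sin x"
    using sin_add[of "2 * x" x] by (simp add: sin_double cos_double distrib_right)
  then show ?thesis using sin_cos_squared_add[of x] by algebra
qed

lemma polar_treble_angle:
  fixes a b r :: real
  assumes "a\<^sup>2 + b\<^sup>2 = r\<^sup>2" "r > 0"
  obtains \<theta> where "a = r * (4 * cos \<theta> ^ 3 - 3 * cos \<theta>)" "b = r * (3 * sin \<theta> - 4 * sin \<theta> ^ 3)"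
proof -
  have "(a / r)\<^sup>2 + (b / r)\<^sup>2 = 1" using assms by (simp add: power_divide field_simps)
  then obtain \<phi> where "a / r = cos \<phi>" "b / r = sin \<phi>" using sincos_total_2pi by blast
  then have "a = r * cos (3 * (\<phi> / 3))" "b = r * sin (3 * (\<phi> / 3))" using assms(2) by (simp_all add: field_simps)
  then show ?thesis using that by (simp only: cos_treble_cos sin_treble_sin)
qed

lemma cubic_form_max_at_axis:
  fixes h :: tensor3
  obtains R m where "R \<in> O3" "\<And>x. cubic_form (act (transpose R) h) x \<le> m * norm x ^ 3"
    "cubic_form (act (transpose R) h) (vector [0, 0, 1]) = m"
proof -
  have "continuous_on (sphere 0 1) (cubic_form h)"
    unfolding cubic_form_def by (intro continuous_intros)
  moreover have "axis 1 1 \<in> sphere (0::real^3) 1" by simp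
  ultimately obtain v where "v \<in> sphere 0 1" and vmax: "\<And>y. y \<in> sphere 0 1 \<Longrightarrow> cubic_form h y \<le> cubic_form h v"
    using continuous_attains_sup[OF compact_sphere] by blast
  then have v: "norm v = 1" by simp
  obtain R where "orthogonal_matrix R" and Rv: "R *v axis 3 1 = v"
    using orthogonal_matrix_exists_basis[OF v] by blast
  then have R: "R \<in> O3" by (simp add: O3_def)
  have rotated: "cubic_form (act (transpose R) h) x = cubic_form h (R *v x)" for x
    by (simp add: cubic_form_act)
  have "cubic_form h (R *v x) \<le> cubic_form h v * norm x ^ 3" for x
  proof (cases "x = 0")
    case True then show ?thesis by (simp add: cubic_form_def)
  next
    case False
    then have "norm (R *v x) > 0" using norm_O3_mult[OF R] by simp
    then have "cubic_form h (R *v x) = norm x ^ 3 * cubic_form h ((1 / norm x) *\<^sub>R (R *v x))"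
      using cubic_form_scaleR[of h "norm x" "(1 / norm x) *\<^sub>R (R *v x)"] norm_O3_mult[OF R] by simp
    also have "\<dots> \<le> norm x ^ 3 * cubic_form h v"
      using vmax[of "(1 / norm x) *\<^sub>R (R *v x)"] False norm_O3_mult[OF R] by (simp add: dist_norm)
    finally show ?thesis by (simp add: mult.commute)
  qed
  moreover have "vector [0, 0, 1] = (axis 3 1 :: real^3)"
    by (simp add: vec_eq_iff forall_3 axis_def)
  ultimately show ?thesis using that[OF R, of "cubic_form h v"] by (simp add: rotated Rv)
qed

lemma axis_maximum_eq_rotated_tetra_tensor_z:
  assumes sy: "totally_symmetric h" and tr: "trace3 h = 0" and d2: "d2 h = c *\<^sub>R mat 1"
    and le: "\<And>x. cubic_form h x \<le> m * norm x ^ 3" and top: "cubic_form h (vector [0, 0, 1]) = m"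
  shows "\<exists>\<theta> k. h = act (rot_z (cos \<theta>) (sin \<theta>)) (k *\<^sub>R tetra_tensor_z)"
  using isotropic_axis_maximum_coeffs[OF assms]
proof
  assume "h = 0"
  then show ?thesis by (intro exI[of _ 0]) (simp add: act_zero)
next
  assume coeffs: "m > 0 \<and> h$1$2$3 = 0 \<and> h$1$1$3 = -m/2 \<and> h$2$2$3 = -m/2
    \<and> h$1$2$2 = -h$1$1$1 \<and> h$1$1$2 = -h$2$2$2 \<and> (h$1$1$1)\<^sup>2 + (h$2$2$2)\<^sup>2 = m\<^sup>2/2"
  define k where "k = m / 2"
  have "(h$1$1$1)\<^sup>2 + (h$2$2$2)\<^sup>2 = (sqrt 2 * k)\<^sup>2" "sqrt 2 * k > 0"
    using coeffs by (simp_all add: k_def power_mult_distrib power_divide)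
  then obtain \<theta> where "h$1$1$1 = sqrt 2 * k * (4 * cos \<theta> ^ 3 - 3 * cos \<theta>)"
      "h$2$2$2 = sqrt 2 * k * (3 * sin \<theta> - 4 * sin \<theta> ^ 3)"
    by (rule polar_treble_angle)
  then have "h = act (rot_z (cos \<theta>) (sin \<theta>)) (k *\<^sub>R tetra_tensor_z)"
    using coeffs axis_maximum_first_order[OF sy le top]
    by (intro rotated_tetra_tensor_z[OF sy]) (simp_all add: k_def)
  then show ?thesis by blast
qed

lemma isotropic_eq_rotated_tetra_tensor:
  assumes sy: "totally_symmetric h" and tr: "trace3 h = 0" and d2: "d2 h = c *\<^sub>R mat 1"
  shows "\<exists>G\<in>O3. \<exists>l. h = act G (l *\<^sub>R tetra_tensor)"
proof -
  obtain R m where R: "R \<in> O3" and le: "\<And>x. cubic_form (act (transpose R) h) x \<le> m * norm x ^ 3"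
    and top: "cubic_form (act (transpose R) h) (vector [0, 0, 1]) = m"
    using cubic_form_max_at_axis[of h] by blast
  have R': "transpose R \<in> O3" using R by (rule O3_transpose)
  have "totally_symmetric (act (transpose R) h)" using sy by (rule totally_symmetric_act)
  moreover have "trace3 (act (transpose R) h) = 0" using trace3_act[OF R', of h] tr by simp
  moreover have "d2 (act (transpose R) h) = c *\<^sub>R mat 1"
    using O3_conj_scalar[OF R'] by (simp add: d2_act[OF R'] d2)
  ultimately obtain \<theta> k where rotated: "act (transpose R) h = act (rot_z (cos \<theta>) (sin \<theta>)) (k *\<^sub>R tetra_tensor_z)"
    using axis_maximum_eq_rotated_tetra_tensor_z le top by blast
  have "h = act R (act (transpose R) h)" by (simp add: act_act_transpose[OF R])
  also have "\<dots> = act (R ** rot_z (cos \<theta>) (sin \<theta>) ** tetra_axis_frame) ((k * sqrt 3) *\<^sub>R tetra_tensor)"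
    by (simp add: rotated tetra_tensor_z_def act_scaleR act_mult)
  finally have "h = act (R ** rot_z (cos \<theta>) (sin \<theta>) ** tetra_axis_frame) ((k * sqrt 3) *\<^sub>R tetra_tensor)" .
  moreover have "R ** rot_z (cos \<theta>) (sin \<theta>) ** tetra_axis_frame \<in> O3"
    using R rot_z_O3[of "cos \<theta>" "sin \<theta>"] tetra_axis_frame_O3 by (simp add: O3_mult)
  ultimately show ?thesis by blast
qed

section \<open>The harmonic part and the cubic strata\<close>

lemma kdelta_matrix: "(\<chi> i j. kdelta i j) = (mat 1 :: real^3^3)"
  by (simp add: vec_eq_iff kdelta_def mat_def)

lemma dev_eq_0_iff: "dev M = 0 \<longleftrightarrow> M = (tr2 M / 3) *\<^sub>R mat 1"
  by (auto simp: dev_def kdelta_matrix)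

lemma dev_scalar_matrix: "dev (a *\<^sub>R mat 1) = 0"
  by (simp add: dev_def kdelta_matrix tr2_def sum_3 mat_def)

lemma harm_eq_self:
  assumes "totally_symmetric X" "trace3 X = 0" shows "harm X = X"
proof -
  have sym: "sym_part X = X"
    using assms(1) by (simp add: sym_part_def vec_eq_iff totally_symmetric_perms)
  then have "trace_vec X = 0" using assms(2) by (simp add: trace_vec_def trace3_def)
  then show ?thesis by (simp add: harm_def sym q_odot_def vec_eq_iff)
qed

lemma harm_Piez:
  assumes "e \<in> Piez" shows "totally_symmetric (harm e)" "trace3 (harm e) = 0"
proof -
  have P: "e$i$j$k = e$i$k$j" for i j k using assms by (simp add: Piez_def)
  have kd: "kdelta i j = kdelta j i" for i j by (simp add: kdelta_def)
  show "totally_symmetric (harm e)" unfolding totally_symmetric_def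
  proof (intro allI conjI)
    fix i j k
    show "harm e $i$j$k = harm e $j$i$k"
      using P[of k i j] by (simp add: harm_def sym_part_def q_odot_def kd algebra_simps)
    show "harm e $i$j$k = harm e $i$k$j"
      using P[of i j k] P[of k i j] P[of j i k] by (simp add: harm_def sym_part_def q_odot_def kd algebra_simps)
  qed
  show "trace3 (harm e) = 0"
    unfolding vec_eq_iff forall_3
    by (simp add: trace3_def harm_def q_odot_def kdelta_def sum_3 trace_vec_def field_simps)
qed

lemma rotated_tetra_tensor_isotropic_harmonic:
  assumes g: "g \<in> O3"
  shows "harm (act g (l *\<^sub>R tetra_tensor)) = act g (l *\<^sub>R tetra_tensor)"
    "dev (d2 (act g (l *\<^sub>R tetra_tensor))) = 0"
proof -
  show "harm (act g (l *\<^sub>R tetra_tensor)) = act g (l *\<^sub>R tetra_tensor)"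
    using trace3_act[OF g, of "l *\<^sub>R tetra_tensor"]
    by (intro harm_eq_self totally_symmetric_act totally_symmetric_scaleR totally_symmetric_tetra_tensor)
      (simp add: trace3_scaleR trace3_tetra_tensor)
  have "d2 (act g (l *\<^sub>R tetra_tensor)) = (2 * l\<^sup>2) *\<^sub>R mat 1"
    using O3_conj_scalar[OF g, of 2] by (simp add: act_scaleR d2_scaleR d2_act[OF g] d2_tetra_tensor)
  then show "dev (d2 (act g (l *\<^sub>R tetra_tensor))) = 0" by (simp add: dev_scalar_matrix)
qed

lemma Piez_rotated_tetra_tensor_iff:
  assumes "e \<in> Piez"
  shows "(\<exists>g\<in>O3. \<exists>l. e = act g (l *\<^sub>R tetra_tensor)) \<longleftrightarrow> e - harm e = 0 \<and> dev (d2 (harm e)) = 0"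
proof
  assume "\<exists>g\<in>O3. \<exists>l. e = act g (l *\<^sub>R tetra_tensor)"
  then show "e - harm e = 0 \<and> dev (d2 (harm e)) = 0"
    using rotated_tetra_tensor_isotropic_harmonic by auto
next
  assume conds: "e - harm e = 0 \<and> dev (d2 (harm e)) = 0"
  then have "d2 (harm e) = (tr2 (d2 (harm e)) / 3) *\<^sub>R mat 1" using dev_eq_0_iff by blast
  moreover have "e = harm e" using conds by simp
  ultimately show "\<exists>g\<in>O3. \<exists>l. e = act g (l *\<^sub>R tetra_tensor)"
    using isotropic_eq_rotated_tetra_tensor harm_Piez[OF assms] by metis
qed

lemma Sigma_bar_Ominus_iff:
  "e \<in> Sigma_bar_Ominus \<longleftrightarrow> (\<exists>g\<in>O3. \<exists>l. e = act g (l *\<^sub>R tetra_tensor))"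
proof
  assume "e \<in> Sigma_bar_Ominus"
  then show "\<exists>g\<in>O3. \<exists>l. e = act g (l *\<^sub>R tetra_tensor)"
    unfolding Sigma_bar_Ominus_def using conj_Ominus_symmetry_imp_rotated_tetra_tensor by blast
next
  assume "\<exists>g\<in>O3. \<exists>l. e = act g (l *\<^sub>R tetra_tensor)"
  then obtain g l where g: "g \<in> O3" and e: "e = act g (l *\<^sub>R tetra_tensor)" by blast
  have "Ominus \<subseteq> sym_group (l *\<^sub>R tetra_tensor)"
    by (auto simp: sym_group_def Ominus_def act_scaleR act_tetra_tensor)
  then have "conj g Ominus \<subseteq> sym_group e" by (auto simp: e sym_group_act[OF g] conj_def)
  then show "e \<in> Sigma_bar_Ominus" using g by (auto simp: Sigma_bar_Ominus_def)
qed

lemma neg_mat_1_not_conj_Ominus: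
  assumes g: "g \<in> O3" shows "- mat 1 \<notin> conj g Ominus"
proof
  assume "- mat 1 \<in> conj g Ominus"
  then obtain r where r: "r \<in> Ominus" and "- mat 1 = g ** r ** transpose g"
    unfolding conj_def matrix_inv_O3[OF g] by auto
  then have "r = transpose g ** (- mat 1) ** g"
    using O3_transpose_mult[OF g]
    by (simp add: matrix_mul_assoc[symmetric] matrix_mul_lid) (simp add: matrix_mul_assoc matrix_mul_rid)
  also have "\<dots> = - mat 1"
    using O3_conj_scalar[OF O3_transpose[OF g], of "-1"] by simp
  finally have "r *v vector [1, 1, 1] = vector [-1, -1, -1]"
    by (simp add: vec_eq_iff forall_3 matrix_vector_mult_def mat_def sum_3)
  moreover have "vector [1, 1, 1] \<in> tetra" by (simp add: tetra_def)
  ultimately have "vector [-1, -1, -1] \<in> tetra" using r by (force simp: Ominus_def)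
  then show False by (simp add: mem_tetra_iff)
qed

lemma Sigma_Ominus_iff: "e \<in> Sigma_Ominus \<longleftrightarrow> e \<in> Sigma_bar_Ominus \<and> e \<noteq> 0"
proof
  assume "e \<in> Sigma_Ominus"
  then obtain g where g: "g \<in> O3" and sym: "sym_group e = conj g Ominus"
    by (auto simp: Sigma_Ominus_def)
  then have "e \<in> Sigma_bar_Ominus" by (auto simp: Sigma_bar_Ominus_def)
  moreover have "- mat 1 \<in> O3"
    unfolding O3_def mem_Collect_eq orthogonal_matrix vec_eq_iff forall_3
    by (simp add: matrix_matrix_mult_def transpose_def mat_def sum_3)
  then have "- mat 1 \<in> sym_group 0" by (simp add: sym_group_def act_zero)
  then have "e \<noteq> 0" using sym neg_mat_1_not_conj_Ominus[OF g] by auto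
  ultimately show "e \<in> Sigma_bar_Ominus \<and> e \<noteq> 0" ..
next
  assume "e \<in> Sigma_bar_Ominus \<and> e \<noteq> 0"
  then obtain g l where g: "g \<in> O3" and e: "e = act g (l *\<^sub>R tetra_tensor)" and "e \<noteq> 0"
    by (auto simp: Sigma_bar_Ominus_iff)
  then have "l \<noteq> 0" by (auto simp: act_zero)
  then have "sym_group e = conj g Ominus" by (simp add: e sym_group_act[OF g] sym_group_tetra_tensor)
  then show "e \<in> Sigma_Ominus" using g by (auto simp: Sigma_Ominus_def)
qed

theorem theorem7p1:
  fixes e :: tensor3
  assumes "e \<in> Piez"
  shows "(e \<in> Sigma_bar_Ominus \<longleftrightarrow> e - harm e = 0 \<and> dev (d2 (harm e)) = 0)
       \<and> (e \<in> Sigma_Ominus \<longleftrightarrow> e - harm e = 0 \<and> dev (d2 (harm e)) = 0 \<and> harm e \<noteq> 0)"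
proof
  show bar: "e \<in> Sigma_bar_Ominus \<longleftrightarrow> e - harm e = 0 \<and> dev (d2 (harm e)) = 0"
    using Sigma_bar_Ominus_iff Piez_rotated_tetra_tensor_iff[OF assms] by simp
  show "e \<in> Sigma_Ominus \<longleftrightarrow> e - harm e = 0 \<and> dev (d2 (harm e)) = 0 \<and> harm e \<noteq> 0"
    unfolding Sigma_Ominus_iff bar by auto
qed

end
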